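(* Let $d\ge1$ be an integer, and let $Q_1,\dots,Q_\ell$ be a sequence of subsets of $V$, each of size $1$ or $2$. For every offline vertex $i$, $$\mu^i(Q_1,Q_2,\dots,Q_\ell)=\mu^i(Q_\ell,Q_{\ell-1},\dots,Q_1).$$ Here $\mu^i(R_1,\dots,R_k)$ denotes the expected number of rounds in which $i$ is matched when Algorithm 1 is run on the proposal sequence $R_1,\dots,R_k$.
   Context: Online correlated rental setting: there is a finite set $V$ of offline vertices and an integer $d\ge1$. A sequence of proposals (subsets of $V$ of size $1$ or $2$) is fixed in advance and revealed one per round; at each round the algorithm selects one vertex of the current proposal. An offline vertex $i$ is matched at round $j$ if it is selected at round $j$ and was not matched at any round $t$ with $j-d<t<j$. Algorithm 1: it keeps a state $\tau_{i,t}\in\{\mathrm{sel},\mathrm{nsel},\mathrm{unk}\}$ for every $i$ and round $t$, initially all $\mathrm{unk}$. All random draws are fresh and independent. "Reset $i$" at round $j$ means setting $\tau_{i,t}=\mathrm{unk}$ for all $t\in[j+1,j+d-1]$. (1) If the proposal at round $j$ is $\{i_1\}$: reset $i_1$ and select $i_1$. (2) If the proposal is $\{i_1,i_2\}$: with probability $1/2$ the round is a sender, and otherwise it is a receiver. - Sender: draw $\ell,m\in\{1,2\}$ independently and uniformly. Reset $i_{3-m}$. Set $\tau_{i_m,t}=\mathrm{sel}$ for all $t\in[j+1,j+d-1]$ if $\ell=m$, and $\mathrm{nsel}$ otherwise. Select $i_\ell$. - Receiver: draw $m\in\{1,2\}$ uniformly. If $\tau_{i_m,j}=\mathrm{sel}$,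 let $\ell=3-m$; if $\tau_{i_m,j}=\mathrm{nsel}$, let $\ell=m$; otherwise draw $\ell$ uniformly from $\{1,2\}$. Reset $i_1,i_2$. Select $i_\ell$. *)

theory Defs
  imports "HOL-Probability.Probability"
begin

datatype tau = Sel | NSel | Unk

type_synonym 'v state = "'v \<Rightarrow> nat \<Rightarrow> tau"

definition set_range :: "nat \<Rightarrow> nat \<Rightarrow> 'v \<Rightarrow> tau \<Rightarrow> 'v state \<Rightarrow> 'v state" where
  "set_range d j i x \<tau> = (\<lambda>v t. if v = i \<and> j + 1 \<le> t \<and> t \<le> j + d - 1 then x else \<tau> v t)"

definition reset :: "nat \<Rightarrow> nat \<Rightarrow> 'v \<Rightarrow> 'v state \<Rightarrow> 'v state" where
  "reset d j i \<tau> = set_range d j i Unk \<tau>"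

definition unif12 :: "nat pmf" where
  "unif12 = pmf_of_set {1, 2}"

definition step :: "nat \<Rightarrow> nat \<Rightarrow> 'v list \<Rightarrow> 'v state \<Rightarrow> ('v state \<times> 'v) pmf" where
  "step d j ps \<tau> =
    (if length ps = 1 then return_pmf (reset d j (ps ! 0) \<tau>, ps ! 0)
     else
       (let pick = (\<lambda>k::nat. if k = 1 then ps ! 0 else ps ! 1) in
        do {
          sender \<leftarrow> bernoulli_pmf (1/2);
          if sender then do {
            l \<leftarrow> unif12;
            m \<leftarrow> unif12;
            let \<tau>1 = reset d j (pick (3 - m)) \<tau>;
            let \<tau>2 = set_range d j (pick m) (if l = m then Sel else NSel) \<tau>1;
            return_pmf (\<tau>2, pick l)
          } else do {
            m \<leftarrow> unif12;
            l \<leftarrow> (case \<tau> (pick m) j of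
                    Sel \<Rightarrow> return_pmf (3 - m)
                  | NSel \<Rightarrow> return_pmf m
                  | Unk \<Rightarrow> unif12);
            return_pmf (reset d j (pick 2) (reset d j (pick 1) \<tau>), pick l)
          }
        }))"

fun run :: "nat \<Rightarrow> nat \<Rightarrow> 'v list list \<Rightarrow> 'v state \<Rightarrow> 'v list pmf" where
  "run d j [] \<tau> = return_pmf []"
| "run d j (ps # pss) \<tau> =
     do { (\<tau>', s) \<leftarrow> step d j ps \<tau>; ss \<leftarrow> run d (j + 1) pss \<tau>'; return_pmf (s # ss) }"

definition enum_set :: "'v set \<Rightarrow> 'v list" where
  "enum_set Q = (SOME xs. distinct xs \<and> set xs = Q)"

function matched :: "nat \<Rightarrow> 'v list \<Rightarrow> 'v \<Rightarrow> nat \<Rightarrow> bool" where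
  "matched d sel i j =
     (1 \<le> j \<and> j \<le> length sel \<and> sel ! (j - 1) = i \<and>
      (\<forall>t\<in>{j - d<..<j}. \<not> matched d sel i t))"
  by auto
termination by (relation "Wellfounded.measure (\<lambda>(d, sel, i, j). j)") auto

definition num_matched :: "nat \<Rightarrow> 'v list \<Rightarrow> 'v \<Rightarrow> nat" where
  "num_matched d sel i = card {j \<in> {1..length sel}. matched d sel i j}"

definition mu :: "nat \<Rightarrow> 'v set list \<Rightarrow> 'v \<Rightarrow> real" where
  "mu d Qs i = measure_pmf.expectation (run d 1 (map enum_set Qs) (\<lambda>_ _. Unk))
                 (\<lambda>sel. real (num_matched d sel i))"

end

theory Submission
  imports Defs
begin

text \<open>
  Resolving the random choices of Algorithm 1 round by round, the probability that it selects a
  sequence \<open>s\<close> becomes a sum, over choice sequences (sender or receiver, and the index \<open>m\<close>, in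
  every round), of a product of per-round weights. From the all-unknown state the rounds interact
  only through links: a sender round \<open>a\<close> writes a hint on a vertex \<open>v\<close>, and the next round
  \<open>b \<le> a + d - 1\<close> proposing \<open>v\<close> reads it as a receiver. The weight of a choice sequence is a
  product of base weights times \<open>2\<close> per link, or \<open>0\<close> if some receiver selects \<open>v\<close> exactly when its
  sender did. Reversing the rounds and exchanging senders with receivers maps links bijectively to
  links, so on the reversed input the selections are distributed as the reversed selections.
  Finally, the rounds in which \<open>i\<close> is matched form a largest \<open>d\<close>-separated set of rounds selecting
  \<open>i\<close> (greedy is optimal), so their number is invariant under reversal.
\<close>

section \<open>One round as a weighted sum over choices\<close>

definition pick :: "'v list \<Rightarrow> nat \<Rightarrow> 'v" where
  "pick ps m = (if m = 1 then ps ! 0 else ps ! 1)"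

definition other :: "'v list \<Rightarrow> 'v \<Rightarrow> 'v" where
  "other ps v = (if v = ps ! 0 then ps ! 1 else ps ! 0)"

definition valid_proposal :: "'v list \<Rightarrow> bool" where
  "valid_proposal ps \<longleftrightarrow> length ps = 1 \<or> (length ps = 2 \<and> ps ! 0 \<noteq> ps ! 1)"

text \<open>
  A choice \<open>(b, m)\<close> fixes whether the round is a sender and its draw of \<open>m\<close>; the remaining
  draws are summed out in \<open>choice_weight\<close>.
\<close>

definition choices :: "(bool \<times> nat) set" where
  "choices = UNIV \<times> {1, 2}"

definition next_state ::
    "nat \<Rightarrow> nat \<Rightarrow> 'v list \<Rightarrow> bool \<times> nat \<Rightarrow> 'v \<Rightarrow> 'v state \<Rightarrow> 'v state" where
  "next_state d j ps c x \<tau> =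
    (if length ps = 1 then reset d j (ps ! 0) \<tau>
     else if fst c then
       set_range d j (pick ps (snd c)) (if x = pick ps (snd c) then Sel else NSel)
         (reset d j (pick ps (3 - snd c)) \<tau>)
     else reset d j (pick ps 2) (reset d j (pick ps 1) \<tau>))"

definition hint_of :: "tau \<Rightarrow> bool option" where
  "hint_of t = (case t of Sel \<Rightarrow> Some True | NSel \<Rightarrow> Some False | Unk \<Rightarrow> None)"

text \<open>
  Probability of the choice \<open>c\<close> together with the selection \<open>x\<close>, given the hint \<open>h\<close> that a
  receiver finds on vertex \<open>pick ps (snd c)\<close>. For a singleton proposal the four choices are
  dummies of weight \<open>1/4\<close> each.
\<close>

definition choice_weight :: "'v list \<Rightarrow> bool \<times> nat \<Rightarrow> bool option \<Rightarrow> 'v \<Rightarrow> real" where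
  "choice_weight ps c h x =
    (if length ps = 1 then (if x = ps ! 0 then 1/4 else 0)
     else if fst c then (if x \<in> set ps then 1/8 else 0)
     else (case h of
             None \<Rightarrow> (if x \<in> set ps then 1/8 else 0)
           | Some b \<Rightarrow>
               (if x = (if b then other ps (pick ps (snd c)) else pick ps (snd c)) then 1/4 else 0)))"

lemma set_length_2: "length ps = 2 \<Longrightarrow> set ps = {ps ! 0, ps ! 1}"
  by (cases ps; cases "tl ps"; auto)

lemma pick_in_set: "length ps = 2 \<Longrightarrow> pick ps m \<in> set ps"
  by (auto simp: pick_def set_length_2)

lemma sum_choices: "(\<Sum>c\<in>choices. f c) = f (True, 1) + f (True, 2) + f (False, 1) + f (False, 2)"
proof -
  have "choices = {(True, 1), (True, 2), (False, 1), (False, 2)}"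
    by (auto simp: choices_def)
  then show ?thesis
    unfolding \<open>choices = _\<close> by (simp add: add.assoc)
qed

lemma expectation_indicator_singleton:
  "measure_pmf.expectation p (\<lambda>x. of_bool (x = s)) = pmf p s"
proof -
  have "(\<lambda>x. of_bool (x = s) :: real) = indicator {s}"
    by (auto simp: indicator_def)
  then show ?thesis
    by (simp add: measure_pmf_single)
qed

lemma pmf_bind_Cons:
  "pmf (p \<bind> (\<lambda>ss. return_pmf (y # ss))) (x # s) = (if y = x then pmf p s else 0)"
  by (simp add: pmf_bind indicator_def expectation_indicator_singleton[of p s, symmetric]
      cong: if_cong)

lemma pmf_run_Cons_step:
  "pmf (run d j (ps # pss) \<tau>) (x # s) =
     measure_pmf.expectation (step d j ps \<tau>)
       (\<lambda>(\<tau>', y). if y = x then pmf (run d (j + 1) pss \<tau>') s else 0)"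
  unfolding run.simps
  by (simp add: pmf_bind split_def, rule Bochner_Integration.integral_cong)
    (auto simp: pmf_bind indicator_def expectation_indicator_singleton)

lemma pmf_bind_bernoulli_half:
  "pmf (bernoulli_pmf (1/2) \<bind> f) x = (pmf (f True) x + pmf (f False) x) / 2"
  by (simp add: pmf_bind)

lemma pmf_bind_pmf_of_set_12:
  "pmf (pmf_of_set {Suc 0, 2} \<bind> f) x = (pmf (f 1) x + pmf (f 2) x) / 2"
  by (simp add: pmf_bind_pmf_of_set)

lemma pmf_run_Cons:
  assumes "valid_proposal ps"
  shows "pmf (run d j (ps # pss) \<tau>) (x # s) =
    (\<Sum>c\<in>choices. choice_weight ps c (hint_of (\<tau> (pick ps (snd c)) j)) x *
                   pmf (run d (j + 1) pss (next_state d j ps c x \<tau>)) s)"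
proof (cases "length ps = 1")
  case True
  then show ?thesis
    unfolding pmf_run_Cons_step
    by (simp add: step_def choices_def choice_weight_def next_state_def)
next
  case False
  then have "length ps = 2" and "ps ! 0 \<noteq> ps ! 1"
    using assms by (auto simp: valid_proposal_def)
  then show ?thesis
    apply (subst run.simps)
    apply (simp only: step_def Let_def if_not_P[OF False])
    apply (simp only: bind_assoc_pmf bind_return_pmf if_distrib[of "\<lambda>p. bind_pmf p _"]
        tau.case_distrib[of "\<lambda>p. bind_pmf p _"] prod.case)
    apply (simp only: if_False numeral_eq_one_iff semiring_norm(85) unif12_def)
    apply (cases "\<tau> (ps ! 0) j"; cases "\<tau> (ps ! 1) j"; cases "x = ps ! 0"; cases "x = ps ! 1")
    apply (simp_all add: set_length_2 pmf_bind_bernoulli_half pmf_bind_pmf_of_set_12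
        pmf_bind_Cons sum_choices choice_weight_def next_state_def pick_def other_def hint_of_def
        del: run.simps)
    done
qed

section \<open>The selection distribution as a sum over choice sequences\<close>

fun last_occurrence :: "'v list list \<Rightarrow> nat \<Rightarrow> 'v \<Rightarrow> nat option" where
  "last_occurrence pss 0 v = None"
| "last_occurrence pss (Suc k) v = (if v \<in> set (pss ! k) then Some k else last_occurrence pss k v)"

lemma last_occurrence_Cons:
  "last_occurrence (ps # pss) (Suc k) v =
    (case last_occurrence pss k v of
       Some k' \<Rightarrow> Some (Suc k')
     | None \<Rightarrow> if v \<in> set ps then Some 0 else None)"
  by (induction k) auto

lemma last_occurrence_eq_Some_iff:
  "last_occurrence pss k v = Some a \<longleftrightarrow>
    a < k \<and> v \<in> set (pss ! a) \<and> (\<forall>i. a < i \<and> i < k \<longrightarrow> v \<notin> set (pss ! i))"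
proof (induction k)
  case 0
  then show ?case by simp
next
  case (Suc k)
  then show ?case
    by (cases "v \<in> set (pss ! k)") (auto simp: less_Suc_eq)
qed

text \<open>
  The hint that round \<open>k\<close> (counted from round \<open>j0\<close>) finds on \<open>v\<close>, determined by the choices
  \<open>cs\<close> and selections \<open>s\<close> of the earlier rounds, or by the initial state \<open>\<tau>\<close> if \<open>v\<close> has not been
  proposed since round \<open>j0\<close>.
\<close>

definition hint ::
    "nat \<Rightarrow> nat \<Rightarrow> 'v list list \<Rightarrow> 'v state \<Rightarrow> (bool \<times> nat) list \<Rightarrow> 'v list \<Rightarrow> nat \<Rightarrow> 'v
      \<Rightarrow> bool option" where
  "hint d j0 pss \<tau> cs s k v =
    (case last_occurrence pss k v of
       Some a \<Rightarrow>
         (if length (pss ! a) = 2 \<and> fst (cs ! a) \<and> pick (pss ! a) (snd (cs ! a)) = v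
             \<and> j0 + k \<le> j0 + a + d - 1
          then Some (s ! a = v) else None)
     | None \<Rightarrow> hint_of (\<tau> v (j0 + k)))"

definition path_weight ::
    "nat \<Rightarrow> nat \<Rightarrow> 'v list list \<Rightarrow> 'v state \<Rightarrow> (bool \<times> nat) list \<Rightarrow> 'v list \<Rightarrow> real" where
  "path_weight d j0 pss \<tau> cs s =
    (\<Prod>k<length pss. choice_weight (pss ! k) (cs ! k)
        (hint d j0 pss \<tau> cs s k (pick (pss ! k) (snd (cs ! k)))) (s ! k))"

definition choice_lists :: "nat \<Rightarrow> (bool \<times> nat) list set" where
  "choice_lists n = {cs. length cs = n \<and> set cs \<subseteq> choices}"

text \<open>Hints written in round \<open>j - 1\<close> or earlier never reach round \<open>j + d - 1\<close>.\<close>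

definition unknown_from :: "nat \<Rightarrow> nat \<Rightarrow> 'v state \<Rightarrow> bool" where
  "unknown_from d j \<tau> \<longleftrightarrow> (\<forall>v t. j + d - 1 \<le> t \<longrightarrow> \<tau> v t = Unk)"

lemma unknown_from_next_state:
  "unknown_from d j \<tau> \<Longrightarrow> unknown_from d (Suc j) (next_state d j ps c x \<tau>)"
  by (auto simp: unknown_from_def next_state_def set_range_def reset_def)

lemma next_state_notin:
  "valid_proposal ps \<Longrightarrow> v \<notin> set ps \<Longrightarrow> next_state d j ps c x \<tau> v t = \<tau> v t"
  by (auto simp: next_state_def valid_proposal_def set_range_def reset_def pick_def set_length_2)

lemma hint_of_next_state_in:
  assumes "valid_proposal ps" "c \<in> choices" "unknown_from d j \<tau>" "v \<in> set ps" "j + 1 \<le> t"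
  shows "hint_of (next_state d j ps c x \<tau> v t) =
    (if length ps = 2 \<and> fst c \<and> pick ps (snd c) = v \<and> t \<le> j + d - 1 then Some (x = v) else None)"
proof -
  have unk: "\<tau> v t = Unk" if "\<not> t \<le> j + d - 1"
    using assms(3) that by (auto simp: unknown_from_def)
  show ?thesis
  proof (cases "length ps = 1")
    case True
    then have "v = ps ! 0"
      using assms(4) by (cases ps) auto
    then show ?thesis
      using True unk assms(5) by (auto simp: next_state_def reset_def set_range_def hint_of_def)
  next
    case False
    then have "length ps = 2" and "ps ! 0 \<noteq> ps ! 1"
      using assms(1) by (auto simp: valid_proposal_def)
    moreover obtain b m where "c = (b, m)" "m \<in> {1, 2}"
      using assms(2) by (auto simp: choices_def)
    moreover have "v = ps ! 0 \<or> v = ps ! 1"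
      using assms(4) set_length_2[of ps] calculation(1) by auto
    ultimately show ?thesis
      using False unk assms(5)
      by (cases b; cases "t \<le> j + d - 1";
          auto simp: next_state_def reset_def set_range_def hint_of_def pick_def)
  qed
qed

lemma hint_Cons:
  assumes "valid_proposal ps" "c \<in> choices" "unknown_from d j \<tau>"
  shows "hint d j (ps # pss) \<tau> (c # cs) (x # s) (Suc k) v =
    hint d (Suc j) pss (next_state d j ps c x \<tau>) cs s k v"
proof (cases "last_occurrence pss k v")
  case (Some a)
  then show ?thesis
    by (simp add: hint_def last_occurrence_Cons del: last_occurrence.simps)
next
  case None
  then show ?thesis
    using hint_of_next_state_in[OF assms _, of v "Suc j + k" x] next_state_notin[OF assms(1)]
    by (cases "v \<in> set ps") (simp_all add: hint_def last_occurrence_Cons del: last_occurrence.simps)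
qed

lemma hint_Cons_0: "hint d j (ps # pss) \<tau> (c # cs) (x # s) 0 v = hint_of (\<tau> v j)"
  by (simp add: hint_def)

lemma path_weight_Cons:
  assumes "valid_proposal ps" "c \<in> choices" "unknown_from d j \<tau>"
  shows "path_weight d j (ps # pss) \<tau> (c # cs) (x # s) =
    choice_weight ps c (hint_of (\<tau> (pick ps (snd c)) j)) x *
    path_weight d (Suc j) pss (next_state d j ps c x \<tau>) cs s"
  unfolding path_weight_def length_Cons prod.lessThan_Suc_shift
  by (simp add: hint_Cons[OF assms] hint_Cons_0)

lemma sum_choice_lists_Suc:
  "(\<Sum>cs\<in>choice_lists (Suc n). f cs) = (\<Sum>c\<in>choices. \<Sum>cs\<in>choice_lists n. f (c # cs))"
proof -
  have split: "choice_lists (Suc n) = (\<lambda>(c, cs). c # cs) ` (choices \<times> choice_lists n)"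
    by (auto simp: choice_lists_def length_Suc_conv image_iff)
  have "inj_on (\<lambda>(c, cs). c # cs) (choices \<times> choice_lists n)"
    by (auto simp: inj_on_def)
  then show ?thesis
    unfolding split by (simp add: sum.reindex sum.cartesian_product split_def)
qed

lemma pmf_run_eq_sum_path_weight:
  assumes "\<forall>ps\<in>set pss. valid_proposal ps" "unknown_from d j \<tau>"
  shows "pmf (run d j pss \<tau>) s =
    (if length s = length pss then (\<Sum>cs\<in>choice_lists (length pss). path_weight d j pss \<tau> cs s)
     else 0)"
  using assms
proof (induction pss arbitrary: j \<tau> s)
  case Nil
  have "choice_lists 0 = {[]}"
    by (auto simp: choice_lists_def)
  then show ?case
    by (simp add: path_weight_def indicator_def)
next
  case (Cons ps pss)
  have valid: "valid_proposal ps"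
    using Cons.prems by simp
  show ?case
  proof (cases s)
    case Nil
    then show ?thesis
      by (simp add: pmf_bind split_def indicator_def)
  next
    case (Cons x s')
    have "pmf (run d j (ps # pss) \<tau>) (x # s') =
        (\<Sum>c\<in>choices. choice_weight ps c (hint_of (\<tau> (pick ps (snd c)) j)) x *
          (if length s' = length pss
           then \<Sum>cs\<in>choice_lists (length pss). path_weight d (Suc j) pss (next_state d j ps c x \<tau>) cs s'
           else 0))"
      unfolding pmf_run_Cons[OF valid]
      using Cons.prems by (simp add: Cons.IH unknown_from_next_state)
    also have "\<dots> =
        (if length (x # s') = length (ps # pss)
         then \<Sum>cs\<in>choice_lists (length (ps # pss)). path_weight d j (ps # pss) \<tau> cs (x # s')
         else 0)"
      using Cons.prems
      by (auto simp: sum_choice_lists_Suc path_weight_Cons[OF valid] sum_distrib_left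
          intro!: sum.cong)
    finally show ?thesis
      using Cons by simp
  qed
qed

section \<open>Closed form from the all-unknown state\<close>

definition probed :: "'v list list \<Rightarrow> (bool \<times> nat) list \<Rightarrow> nat \<Rightarrow> 'v" where
  "probed pss cs k = pick (pss ! k) (snd (cs ! k))"

text \<open>Sender round \<open>a\<close> writes the hint that receiver round \<open>b\<close> reads.\<close>

definition link :: "nat \<Rightarrow> 'v list list \<Rightarrow> (bool \<times> nat) list \<Rightarrow> nat \<Rightarrow> nat \<Rightarrow> bool" where
  "link d pss cs a b \<longleftrightarrow>
    a < b \<and> b < length pss \<and> length (pss ! a) = 2 \<and> length (pss ! b) = 2 \<and>
    fst (cs ! a) \<and> \<not> fst (cs ! b) \<and> probed pss cs a = probed pss cs b \<and>
    (\<forall>i. a < i \<and> i < b \<longrightarrow> probed pss cs b \<notin> set (pss ! i)) \<and> b \<le> a + d - 1"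

definition link_respected :: "'v list list \<Rightarrow> (bool \<times> nat) list \<Rightarrow> 'v list \<Rightarrow> nat \<Rightarrow> nat \<Rightarrow> bool"
  where
  "link_respected pss cs s a b \<longleftrightarrow> (s ! b = probed pss cs b) \<noteq> (s ! a = probed pss cs b)"

definition base_weight :: "'v list list \<Rightarrow> 'v list \<Rightarrow> nat \<Rightarrow> real" where
  "base_weight pss s k =
    (if length (pss ! k) = 1 then (if s ! k = pss ! k ! 0 then 1/4 else 0)
     else (if s ! k \<in> set (pss ! k) then 1/8 else 0))"

definition link_factor :: "nat \<Rightarrow> 'v list list \<Rightarrow> (bool \<times> nat) list \<Rightarrow> 'v list \<Rightarrow> nat \<Rightarrow> real" where
  "link_factor d pss cs s b =
    (if \<exists>a. link d pss cs a b
     then (if \<forall>a. link d pss cs a b \<longrightarrow> link_respected pss cs s a b then 2 else 0)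
     else 1)"

lemma link_unique_sender: "link d pss cs a b \<Longrightarrow> link d pss cs a' b \<Longrightarrow> a = a'"
  unfolding link_def by (metis linorder_neqE_nat pick_in_set probed_def)

lemma link_unique_receiver: "link d pss cs a b \<Longrightarrow> link d pss cs a b' \<Longrightarrow> b = b'"
  unfolding link_def by (metis linorder_neqE_nat pick_in_set probed_def)

lemma link_last_occurrence:
  "link d pss cs a b \<Longrightarrow> last_occurrence pss b (probed pss cs b) = Some a"
  unfolding last_occurrence_eq_Some_iff link_def by (metis pick_in_set probed_def)

lemma choice_weight_empty_state:
  assumes "valid_proposal (pss ! k)" "k < length pss" "d \<ge> 1"
  shows "choice_weight (pss ! k) (cs ! k)
      (hint d j pss (\<lambda>_ _. Unk) cs s k (probed pss cs k)) (s ! k) =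
    base_weight pss s k * link_factor d pss cs s k"
proof (cases "length (pss ! k) = 2 \<and> \<not> fst (cs ! k)")
  case False
  then have "\<not> link d pss cs a k" for a
    by (auto simp: link_def)
  then show ?thesis
    using False assms(1)
    by (auto simp: choice_weight_def base_weight_def link_factor_def valid_proposal_def)
next
  case receiver: True
  define v where "v = probed pss cs k"
  have distinct: "pss ! k ! 0 \<noteq> pss ! k ! 1"
    using assms(1) receiver by (simp add: valid_proposal_def)
  have not_linked_hint: "hint d j pss (\<lambda>_ _. Unk) cs s k v = None"
    if "\<nexists>a. link d pss cs a k"
  proof (cases "last_occurrence pss k v")
    case (Some a)
    then have "\<not> link d pss cs a k"
      using that by blast
    moreover have "a < k" "\<forall>i. a < i \<and> i < k \<longrightarrow> v \<notin> set (pss ! i)"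
      using Some by (simp_all add: last_occurrence_eq_Some_iff)
    ultimately have "\<not> (length (pss ! a) = 2 \<and> fst (cs ! a) \<and> probed pss cs a = v \<and> k \<le> a + d - 1)"
      using receiver assms(2) unfolding link_def v_def by blast
    then show ?thesis
      using Some assms(3) by (auto simp: hint_def probed_def)
  qed (simp add: hint_def hint_of_def)
  show ?thesis
  proof (cases "\<exists>a. link d pss cs a k")
    case False
    then show ?thesis
      using receiver not_linked_hint
      by (simp add: choice_weight_def base_weight_def link_factor_def v_def)
  next
    case True
    then obtain a where a: "link d pss cs a k"
      by blast
    have "(\<forall>a'. link d pss cs a' k \<longrightarrow> link_respected pss cs s a' k) \<longleftrightarrow>
        link_respected pss cs s a k"
      using a link_unique_sender[OF a] by blast
    then have factor: "link_factor d pss cs s k = (if link_respected pss cs s a k then 2 else 0)"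
      using True by (simp add: link_factor_def)
    have "hint d j pss (\<lambda>_ _. Unk) cs s k v = Some (s ! a = v)"
      using link_last_occurrence[OF a] a assms(3) by (auto simp: hint_def link_def v_def probed_def)
    then have "choice_weight (pss ! k) (cs ! k) (hint d j pss (\<lambda>_ _. Unk) cs s k v) (s ! k) =
        (if s ! k = (if s ! a = v then other (pss ! k) v else v) then 1/4 else 0)"
      using receiver by (simp add: choice_weight_def v_def probed_def)
    moreover have "v = pss ! k ! 0 \<or> v = pss ! k ! 1" "set (pss ! k) = {pss ! k ! 0, pss ! k ! 1}"
      using receiver pick_in_set[of "pss ! k"] set_length_2[of "pss ! k"]
      by (auto simp: v_def probed_def)
    ultimately show ?thesis
      unfolding factor base_weight_def link_respected_def v_def[symmetric]
      using receiver distinct by (auto simp: other_def)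
  qed
qed

definition receivers :: "nat \<Rightarrow> 'v list list \<Rightarrow> (bool \<times> nat) list \<Rightarrow> nat set" where
  "receivers d pss cs = {b. \<exists>a. link d pss cs a b}"

definition senders :: "nat \<Rightarrow> 'v list list \<Rightarrow> (bool \<times> nat) list \<Rightarrow> nat set" where
  "senders d pss cs = {a. \<exists>b. link d pss cs a b}"

lemma receivers_subset: "receivers d pss cs \<subseteq> {..<length pss}"
  by (auto simp: receivers_def link_def)

lemma senders_subset: "senders d pss cs \<subseteq> {..<length pss}"
  by (auto simp: senders_def link_def)

lemma card_receivers_eq_card_senders: "card (receivers d pss cs) = card (senders d pss cs)"
proof -
  define links where "links = {(a, b). link d pss cs a b}"
  have "inj_on fst links"
    using link_unique_receiver by (fastforce simp: inj_on_def links_def)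
  moreover have "inj_on snd links"
    using link_unique_sender by (fastforce simp: inj_on_def links_def)
  moreover have "fst ` links = senders d pss cs" "snd ` links = receivers d pss cs"
    by (force simp: links_def senders_def receivers_def image_iff)+
  ultimately show ?thesis
    by (metis card_image)
qed

lemma prod_if_const_zero:
  fixes A :: "'a set"
  assumes "finite A"
  shows "(\<Prod>k\<in>A. if P k then (c :: 'b :: comm_semiring_1) else 0) =
    (if \<forall>k\<in>A. P k then c ^ card A else 0)"
proof (cases "\<forall>k\<in>A. P k")
  case True
  then have "(\<Prod>k\<in>A. if P k then c else 0) = (\<Prod>k\<in>A. c)"
    by (intro prod.cong) auto
  then show ?thesis
    using True by simp
next
  case False
  then obtain k where "k \<in> A" "\<not> P k"
    by blast
  then have "(\<Prod>k\<in>A. if P k then c else 0) = 0"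
    using assms by (intro prod_zero) auto
  then show ?thesis
    using False by auto
qed

lemma path_weight_empty_state:
  assumes "\<forall>ps\<in>set pss. valid_proposal ps" "d \<ge> 1"
  shows "path_weight d j pss (\<lambda>_ _. Unk) cs s =
    (\<Prod>k<length pss. base_weight pss s k) *
    (if \<forall>a b. link d pss cs a b \<longrightarrow> link_respected pss cs s a b
     then 2 ^ card (receivers d pss cs) else 0)"
proof -
  let ?R = "receivers d pss cs"
  have "path_weight d j pss (\<lambda>_ _. Unk) cs s =
      (\<Prod>k<length pss. base_weight pss s k) * (\<Prod>k<length pss. link_factor d pss cs s k)"
    unfolding path_weight_def prod.distrib[symmetric] probed_def[symmetric]
    using assms by (intro prod.cong) (auto simp: choice_weight_empty_state)
  also have "(\<Prod>k<length pss. link_factor d pss cs s k) =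
      (\<Prod>k\<in>?R. if \<forall>a. link d pss cs a k \<longrightarrow> link_respected pss cs s a k then 2 else 0)"
  proof -
    have "(\<Prod>k<length pss. link_factor d pss cs s k) =
        (\<Prod>k<length pss. if k \<in> ?R then
           (if \<forall>a. link d pss cs a k \<longrightarrow> link_respected pss cs s a k then 2 else 0) else 1)"
      by (intro prod.cong) (auto simp: link_factor_def receivers_def)
    then show ?thesis
      using receivers_subset[of d pss cs] by (simp add: prod.If_cases Int_absorb1)
  qed
  also have "\<dots> = (if \<forall>a b. link d pss cs a b \<longrightarrow> link_respected pss cs s a b
                   then 2 ^ card ?R else 0)"
    by (subst prod_if_const_zero[OF finite_subset[OF receivers_subset]]) (auto simp: receivers_def)
  finally show ?thesis .
qed

section \<open>Reversal\<close>

definition flip_rev :: "(bool \<times> nat) list \<Rightarrow> (bool \<times> nat) list" where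
  "flip_rev cs = rev (map (\<lambda>(b, m). (\<not> b, m)) cs)"

lemma flip_rev_flip_rev [simp]: "flip_rev (flip_rev cs) = cs"
  by (simp add: flip_rev_def rev_map comp_def case_prod_beta)

lemma flip_rev_choice_lists: "cs \<in> choice_lists n \<Longrightarrow> flip_rev cs \<in> choice_lists n"
  by (auto simp: choice_lists_def flip_rev_def choices_def)

lemma all_between_rev_iff:
  assumes "a < b" "b < n"
  shows "(\<forall>i. a < i \<and> i < b \<longrightarrow> P (n - Suc i)) \<longleftrightarrow>
    (\<forall>i. n - Suc b < i \<and> i < n - Suc a \<longrightarrow> P i)"
proof
  assume H: "\<forall>i. a < i \<and> i < b \<longrightarrow> P (n - Suc i)"
  show "\<forall>i. n - Suc b < i \<and> i < n - Suc a \<longrightarrow> P i"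
  proof (intro allI impI)
    fix i
    assume "n - Suc b < i \<and> i < n - Suc a"
    then have "a < n - Suc i \<and> n - Suc i < b" "n - Suc (n - Suc i) = i"
      using assms by auto
    then show "P i"
      using H by metis
  qed
next
  assume H: "\<forall>i. n - Suc b < i \<and> i < n - Suc a \<longrightarrow> P i"
  show "\<forall>i. a < i \<and> i < b \<longrightarrow> P (n - Suc i)"
  proof (intro allI impI)
    fix i
    assume "a < i \<and> i < b"
    then have "n - Suc b < n - Suc i \<and> n - Suc i < n - Suc a"
      using assms by auto
    then show "P (n - Suc i)"
      using H by blast
  qed
qed

lemma probed_flip_rev:
  "length cs = length pss \<Longrightarrow> k < length pss \<Longrightarrow>
    probed (rev pss) (flip_rev cs) k = probed pss cs (length pss - Suc k)"
  by (simp add: probed_def flip_rev_def rev_nth case_prod_beta)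

lemma link_flip_rev_iff:
  assumes "length cs = length pss"
  shows "link d (rev pss) (flip_rev cs) a b \<longleftrightarrow>
    b < length pss \<and> link d pss cs (length pss - Suc b) (length pss - Suc a)"
proof (cases "a < b \<and> b < length pss")
  case False
  then show ?thesis
    by (auto simp: link_def)
next
  case True
  define n where "n = length pss"
  have ab: "a < b" "b < n"
    using True by (auto simp: n_def)
  have rev_nth': "rev pss ! i = pss ! (n - Suc i)" if "i < n" for i
    using that by (simp add: rev_nth n_def)
  have flip_nth: "flip_rev cs ! i = (\<not> fst (cs ! (n - Suc i)), snd (cs ! (n - Suc i)))"
    if "i < n" for i
    using that assms by (simp add: flip_rev_def rev_nth n_def case_prod_beta)
  have probed_rev: "probed (rev pss) (flip_rev cs) i = probed pss cs (n - Suc i)" if "i < n" for i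
    using that probed_flip_rev[OF assms] by (simp add: n_def)
  have between: "(\<forall>i. a < i \<and> i < b \<longrightarrow> v \<notin> set (rev pss ! i)) \<longleftrightarrow>
      (\<forall>i. n - Suc b < i \<and> i < n - Suc a \<longrightarrow> v \<notin> set (pss ! i))" for v
  proof -
    have "(\<forall>i. a < i \<and> i < b \<longrightarrow> v \<notin> set (rev pss ! i)) \<longleftrightarrow>
        (\<forall>i. a < i \<and> i < b \<longrightarrow> v \<notin> set (pss ! (n - Suc i)))"
      using rev_nth' ab by (metis less_trans)
    then show ?thesis
      using all_between_rev_iff[OF ab] by simp
  qed
  have "b \<le> a + d - 1 \<longleftrightarrow> n - Suc a \<le> n - Suc b + d - 1"
    using ab by auto
  moreover have "n - Suc b < n - Suc a" "n - Suc a < n"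
    using ab by auto
  ultimately show ?thesis
    unfolding link_def n_def[symmetric] length_rev
    using ab by (simp only: rev_nth' flip_nth probed_rev between) auto
qed

lemma link_respected_flip_rev:
  assumes "length cs = length pss" "length s = length pss"
    and "link d pss cs (length pss - Suc b) (length pss - Suc a)" "a < length pss" "b < length pss"
  shows "link_respected (rev pss) (flip_rev cs) (rev s) a b \<longleftrightarrow>
    link_respected pss cs s (length pss - Suc b) (length pss - Suc a)"
proof -
  have "probed pss cs (length pss - Suc b) = probed pss cs (length pss - Suc a)"
    using assms(3) by (simp add: link_def)
  then show ?thesis
    using assms by (simp add: link_respected_def probed_flip_rev rev_nth) blast
qed

lemma all_links_respected_flip_rev_iff:
  assumes "length cs = length pss" "length s = length pss"
  shows "(\<forall>a b. link d (rev pss) (flip_rev cs) a b \<longrightarrow>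
             link_respected (rev pss) (flip_rev cs) (rev s) a b) \<longleftrightarrow>
    (\<forall>a b. link d pss cs a b \<longrightarrow> link_respected pss cs s a b)"
proof
  assume H: "\<forall>a b. link d (rev pss) (flip_rev cs) a b \<longrightarrow>
    link_respected (rev pss) (flip_rev cs) (rev s) a b"
  show "\<forall>a b. link d pss cs a b \<longrightarrow> link_respected pss cs s a b"
  proof (intro allI impI)
    fix a b
    assume ab: "link d pss cs a b"
    define n where "n = length pss"
    have "a < b" "b < n"
      using ab by (auto simp: link_def n_def)
    then have mirror: "n - Suc (n - Suc a) = a" "n - Suc (n - Suc b) = b" "n - Suc a < n" "n - Suc b < n"
      by auto
    then have "link d (rev pss) (flip_rev cs) (n - Suc b) (n - Suc a)"
      using ab link_flip_rev_iff[OF assms(1)] by (simp add: n_def)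
    then show "link_respected pss cs s a b"
      using H ab mirror link_respected_flip_rev[OF assms, of d "n - Suc a" "n - Suc b"]
      by (simp add: n_def)
  qed
next
  assume H: "\<forall>a b. link d pss cs a b \<longrightarrow> link_respected pss cs s a b"
  show "\<forall>a b. link d (rev pss) (flip_rev cs) a b \<longrightarrow>
    link_respected (rev pss) (flip_rev cs) (rev s) a b"
  proof (intro allI impI)
    fix a b
    assume ab: "link d (rev pss) (flip_rev cs) a b"
    then have "a < b" "b < length pss"
      by (auto simp: link_def)
    moreover have "link d pss cs (length pss - Suc b) (length pss - Suc a)"
      using ab link_flip_rev_iff[OF assms(1)] by simp
    ultimately show "link_respected (rev pss) (flip_rev cs) (rev s) a b"
      using H link_respected_flip_rev[OF assms] by simp
  qed
qed

lemma card_receivers_flip_rev: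
  assumes "length cs = length pss"
  shows "card (receivers d (rev pss) (flip_rev cs)) = card (receivers d pss cs)"
proof -
  define n where "n = length pss"
  have "receivers d (rev pss) (flip_rev cs) = (\<lambda>k. n - Suc k) ` senders d pss cs"
  proof (intro set_eqI iffI)
    fix k
    assume "k \<in> receivers d (rev pss) (flip_rev cs)"
    then obtain a where "link d (rev pss) (flip_rev cs) a k"
      by (auto simp: receivers_def)
    then have "k < n" "n - Suc k \<in> senders d pss cs"
      using link_flip_rev_iff[OF assms] by (auto simp: senders_def n_def)
    then show "k \<in> (\<lambda>k. n - Suc k) ` senders d pss cs"
      by (intro rev_image_eqI[of "n - Suc k"]) auto
  next
    fix k
    assume "k \<in> (\<lambda>k. n - Suc k) ` senders d pss cs"
    then obtain a b where ab: "link d pss cs a b" and k: "k = n - Suc a"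
      by (auto simp: senders_def)
    then have "a < b" "b < n"
      by (auto simp: link_def n_def)
    then have "link d (rev pss) (flip_rev cs) (n - Suc b) k"
      using ab k link_flip_rev_iff[OF assms, of d "n - Suc b" k] by (simp add: n_def)
    then show "k \<in> receivers d (rev pss) (flip_rev cs)"
      by (auto simp: receivers_def)
  qed
  moreover have "inj_on (\<lambda>k. n - Suc k) {..<n}"
    by (rule inj_onI) auto
  then have "inj_on (\<lambda>k. n - Suc k) (senders d pss cs)"
    using senders_subset[of d pss cs] by (auto simp: n_def intro: inj_on_subset)
  ultimately show ?thesis
    by (simp add: card_image card_receivers_eq_card_senders)
qed

lemma path_weight_flip_rev:
  assumes "\<forall>ps\<in>set pss. valid_proposal ps" "d \<ge> 1"
    and "length cs = length pss" "length s = length pss"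
  shows "path_weight d j (rev pss) (\<lambda>_ _. Unk) (flip_rev cs) (rev s) =
    path_weight d j pss (\<lambda>_ _. Unk) cs s"
proof -
  have valid_rev: "\<forall>ps\<in>set (rev pss). valid_proposal ps"
    using assms(1) by simp
  have "(\<Prod>k<length (rev pss). base_weight (rev pss) (rev s) k) =
      (\<Prod>k<length pss. base_weight pss s (length pss - Suc k))"
    using assms(4) by (intro prod.cong) (auto simp: base_weight_def rev_nth)
  also have "\<dots> = (\<Prod>k<length pss. base_weight pss s k)"
    by (rule prod.nat_diff_reindex)
  finally show ?thesis
    unfolding path_weight_empty_state[OF assms(1,2)] path_weight_empty_state[OF valid_rev assms(2)]
      all_links_respected_flip_rev_iff[OF assms(3,4)] card_receivers_flip_rev[OF assms(3)]
    by simp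
qed

lemma pmf_run_rev:
  assumes "\<forall>ps\<in>set pss. valid_proposal ps" "d \<ge> 1"
  shows "pmf (run d j (rev pss) (\<lambda>_ _. Unk)) (rev s) = pmf (run d j pss (\<lambda>_ _. Unk)) s"
proof -
  have empty: "unknown_from d j (\<lambda>_ _. Unk)"
    by (simp add: unknown_from_def)
  have "\<forall>ps\<in>set (rev pss). valid_proposal ps"
    using assms(1) by simp
  note pmf_run = pmf_run_eq_sum_path_weight[OF assms(1) empty]
    pmf_run_eq_sum_path_weight[OF this empty]
  show ?thesis
  proof (cases "length s = length pss")
    case True
    have "(\<Sum>cs\<in>choice_lists (length pss). path_weight d j (rev pss) (\<lambda>_ _. Unk) cs (rev s)) =
        (\<Sum>cs\<in>choice_lists (length pss). path_weight d j (rev pss) (\<lambda>_ _. Unk) (flip_rev cs) (rev s))"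
      by (rule sum.reindex_bij_witness[where i = flip_rev and j = flip_rev])
        (auto simp: flip_rev_choice_lists)
    also have "\<dots> = (\<Sum>cs\<in>choice_lists (length pss). path_weight d j pss (\<lambda>_ _. Unk) cs s)"
      using assms True
      by (intro sum.cong refl path_weight_flip_rev) (auto simp: choice_lists_def)
    finally show ?thesis
      using True by (simp add: pmf_run)
  qed (simp add: pmf_run)
qed

lemma map_pmf_rev_run_rev:
  assumes "\<forall>ps\<in>set pss. valid_proposal ps" "d \<ge> 1"
  shows "map_pmf rev (run d j (rev pss) (\<lambda>_ _. Unk)) = run d j pss (\<lambda>_ _. Unk)"
proof (rule pmf_eqI)
  fix s
  show "pmf (map_pmf rev (run d j (rev pss) (\<lambda>_ _. Unk))) s = pmf (run d j pss (\<lambda>_ _. Unk)) s"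
    using pmf_map_inj'[of rev _ "rev s"] pmf_run_rev[OF assms] by simp
qed

section \<open>Matched rounds are a largest separated set of selecting rounds\<close>

definition separated :: "nat \<Rightarrow> nat set \<Rightarrow> bool" where
  "separated d T \<longleftrightarrow> (\<forall>x\<in>T. \<forall>y\<in>T. x < y \<longrightarrow> x + d \<le> y)"

definition selecting_rounds :: "'v list \<Rightarrow> 'v \<Rightarrow> nat set" where
  "selecting_rounds sel i = {j. 1 \<le> j \<and> j \<le> length sel \<and> sel ! (j - 1) = i}"

definition matched_rounds :: "nat \<Rightarrow> 'v list \<Rightarrow> 'v \<Rightarrow> nat set" where
  "matched_rounds d sel i = {j \<in> {1..length sel}. matched d sel i j}"

declare matched.simps [simp del]

lemma matchedD:
  "matched d sel i j \<Longrightarrow>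
    1 \<le> j \<and> j \<le> length sel \<and> sel ! (j - 1) = i \<and> (\<forall>t\<in>{j - d<..<j}. \<not> matched d sel i t)"
  by (subst (asm) matched.simps) blast

lemma matched_rounds_subset: "matched_rounds d sel i \<subseteq> selecting_rounds sel i"
  by (auto simp: matched_rounds_def selecting_rounds_def dest: matchedD)

lemma separated_matched_rounds: "separated d (matched_rounds d sel i)"
  unfolding separated_def
proof (intro ballI impI)
  fix x y
  assume "x \<in> matched_rounds d sel i" "y \<in> matched_rounds d sel i" "x < y"
  then have "matched d sel i x" "1 \<le> x" "x \<notin> {y - d<..<y}"
    using matchedD[of d sel i y] by (auto simp: matched_rounds_def)
  then show "x + d \<le> y"
    using \<open>x < y\<close> by auto
qed

text \<open>Greedy stays ahead on every prefix of rounds.\<close>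

lemma card_separated_le_matched_upto:
  assumes "d \<ge> 1" "separated d T" "T \<subseteq> selecting_rounds sel i"
  shows "card (T \<inter> {1..k}) \<le> card (matched_rounds d sel i \<inter> {1..k})"
proof (induction k rule: less_induct)
  case (less k)
  let ?M = "matched_rounds d sel i"
  show ?case
  proof (cases "k \<in> T")
    case False
    show ?thesis
    proof (cases k)
      case (Suc k')
      then have "T \<inter> {1..k} = T \<inter> {1..k'}"
        using False by (auto simp: le_Suc_eq)
      then have "card (T \<inter> {1..k}) \<le> card (?M \<inter> {1..k'})"
        using less[of k'] Suc by simp
      also have "\<dots> \<le> card (?M \<inter> {1..k})"
        using Suc by (intro card_mono) auto
      finally show ?thesis .
    qed simp
  next
    case True
    have k: "1 \<le> k" "k \<le> length sel" "sel ! (k - 1) = i" "k - d < k"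
      using True assms by (auto simp: selecting_rounds_def)
    have "T \<inter> {1..k} = insert k (T \<inter> {1..k - d})"
    proof (intro set_eqI iffI)
      fix x
      assume x: "x \<in> T \<inter> {1..k}"
      show "x \<in> insert k (T \<inter> {1..k - d})"
      proof (cases "x < k")
        case True
        then have "x + d \<le> k"
          using assms(2) x \<open>k \<in> T\<close> unfolding separated_def by blast
        then have "x \<le> k - d"
          by arith
        then show ?thesis
          using x by simp
      qed (use x in simp)
    qed (use True k in auto)
    then have "card (T \<inter> {1..k}) = Suc (card (T \<inter> {1..k - d}))"
      using k(4) by simp
    also have "\<dots> \<le> Suc (card (?M \<inter> {1..k - d}))"
      using less[OF k(4)] by simp
    also have "\<dots> \<le> card (?M \<inter> {1..k})"
    proof -
      obtain m where m: "m \<in> ?M" "k - d < m" "m \<le> k"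
      proof (cases "\<exists>t\<in>{k - d<..<k}. matched d sel i t")
        case True
        then show ?thesis
          using that matchedD by (force simp: matched_rounds_def)
      next
        case False
        then have "matched d sel i k"
          using k by (subst matched.simps) blast
        then show ?thesis
          using that[of k] k by (auto simp: matched_rounds_def)
      qed
      then have "insert m (?M \<inter> {1..k - d}) \<subseteq> ?M \<inter> {1..k}"
        by (auto simp: matched_rounds_def)
      then have "card (insert m (?M \<inter> {1..k - d})) \<le> card (?M \<inter> {1..k})"
        by (intro card_mono) auto
      moreover have "m \<notin> ?M \<inter> {1..k - d}"
        using m by auto
      ultimately show ?thesis
        by simp
    qed
    finally show ?thesis .
  qed
qed

lemma card_separated_le_matched:
  assumes "d \<ge> 1" "separated d T" "T \<subseteq> selecting_rounds sel i"
  shows "card T \<le> card (matched_rounds d sel i)"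
proof -
  have "T \<inter> {1..length sel} = T" "matched_rounds d sel i \<inter> {1..length sel} = matched_rounds d sel i"
    using assms(3) by (auto simp: selecting_rounds_def matched_rounds_def)
  then show ?thesis
    using card_separated_le_matched_upto[OF assms, of "length sel"] by simp
qed

lemma card_matched_rounds_rev_le:
  assumes "d \<ge> 1"
  shows "card (matched_rounds d (rev sel) i) \<le> card (matched_rounds d sel i)"
proof -
  let ?M = "matched_rounds d (rev sel) i"
  define mirror where "mirror x = length sel + 1 - x" for x
  have M: "1 \<le> x \<and> x \<le> length sel \<and> rev sel ! (x - 1) = i" if "x \<in> ?M" for x
    using that matched_rounds_subset by (force simp: selecting_rounds_def)
  have "inj_on mirror ?M"
    using M by (force simp: inj_on_def mirror_def)
  moreover have "mirror ` ?M \<subseteq> selecting_rounds sel i"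
  proof
    fix y
    assume "y \<in> mirror ` ?M"
    then obtain x where "x \<in> ?M" "y = mirror x"
      by blast
    with M[OF this(1)] show "y \<in> selecting_rounds sel i"
      by (auto simp: selecting_rounds_def mirror_def rev_nth)
  qed
  moreover have "separated d (mirror ` ?M)"
    unfolding separated_def
  proof (intro ballI impI)
    fix a b
    assume "a \<in> mirror ` ?M" "b \<in> mirror ` ?M" "a < b"
    then obtain x y where "x \<in> ?M" "y \<in> ?M" "a = mirror x" "b = mirror y" "y < x"
      using M by (auto simp: mirror_def)
    then have "y + d \<le> x" "x \<le> length sel"
      using separated_matched_rounds[of d "rev sel" i] M unfolding separated_def by auto
    then show "a + d \<le> b"
      using \<open>a = mirror x\<close> \<open>b = mirror y\<close> by (simp add: mirror_def)
  qed
  ultimately show ?thesis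
    using card_separated_le_matched[OF assms] by (metis card_image)
qed

lemma num_matched_rev:
  assumes "d \<ge> 1"
  shows "num_matched d (rev sel) i = num_matched d sel i"
proof -
  have "num_matched d sel' i = card (matched_rounds d sel' i)" for sel' :: "'a list"
    by (simp add: num_matched_def matched_rounds_def)
  then show ?thesis
    using card_matched_rounds_rev_le[OF assms, of sel i]
      card_matched_rounds_rev_le[OF assms, of "rev sel" i]
    by simp
qed

lemma valid_proposal_enum_set:
  assumes "finite Q" "card Q = 1 \<or> card Q = 2"
  shows "valid_proposal (enum_set Q)"
proof -
  have "\<exists>xs. distinct xs \<and> set xs = Q"
    using finite_distinct_list[OF assms(1)] by blast
  then have "distinct (enum_set Q) \<and> set (enum_set Q) = Q"
    unfolding enum_set_def by (rule someI_ex)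
  then show ?thesis
    using assms(2) distinct_card[of "enum_set Q"]
    by (auto simp: valid_proposal_def nth_eq_iff_index_eq)
qed

theorem claim2:
  fixes V :: "'v set" and d :: nat and Qs :: "'v set list" and i :: 'v
  assumes "finite V" and "d \<ge> 1"
    and "\<forall>Q\<in>set Qs. Q \<subseteq> V \<and> (card Q = 1 \<or> card Q = 2)"
    and "i \<in> V"
  shows "mu d Qs i = mu d (rev Qs) i"
proof -
  define pss where "pss = map enum_set Qs"
  have valid: "\<forall>ps\<in>set pss. valid_proposal ps"
    using assms(1,3) by (auto simp: pss_def intro!: valid_proposal_enum_set dest: finite_subset)
  have "mu d Qs i =
      measure_pmf.expectation (map_pmf rev (run d 1 (rev pss) (\<lambda>_ _. Unk)))
        (\<lambda>sel. real (num_matched d sel i))"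
    by (simp only: mu_def pss_def[symmetric] map_pmf_rev_run_rev[OF valid assms(2)])
  also have "\<dots> = mu d (rev Qs) i"
    by (simp add: mu_def pss_def rev_map num_matched_rev[OF assms(2)])
  finally show ?thesis .
qed

end
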